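(* Let $R$ be a local ring and $s\in R$ a central element. Then $A\in M_2(R;s)$ is strongly clean if and only if one of the following holds: (1) $A\in U\big(M_2(R;s)\big)$; (2) $I_2-A\in U\big(M_2(R;s)\big)$; (3) $A$ is strongly $J$-clean in $M_2(R;s)$.
   Context: All rings are associative with identity. A ring $R$ is local if $R/J(R)$ is a division ring, where $J(R)$ is the Jacobson radical; $U(T)$ is the group of units of a ring $T$. For a ring $R$ and a central element $s\in R$, $M_2(R;s)$ denotes the ring whose elements are the $2\times 2$ arrays $\left[\begin{smallmatrix} a&b\\ c&d\end{smallmatrix}\right]$ with $a,b,c,d\in R$, with componentwise addition and multiplication $\left[\begin{smallmatrix} a&b\\ c&d\end{smallmatrix}\right]\left[\begin{smallmatrix} a'&b'\\ c'&d'\end{smallmatrix}\right]=\left[\begin{smallmatrix} aa'+s^2bc'&ab'+bd'\\ ca'+dc'&s^2cb'+dd'\end{smallmatrix}\right]$, with identity $I_2$. An element $a$ of a ring $T$ is strongly clean if there is an idempotent $e\in T$ with $ae=ea$ and $a-e\in U(T)$; it is strongly $J$-clean if there is an idempotent $e\in T$ with $ae=ea$ and $a-e\in J(T)$. *)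

theory Defs
  imports "HOL-Algebra.Algebra"
begin

definition left_ideal :: "('a, 'b) ring_scheme \<Rightarrow> 'a set \<Rightarrow> bool" where
  "left_ideal R I \<longleftrightarrow> additive_subgroup I R \<and>
     (\<forall>a \<in> carrier R. \<forall>x \<in> I. a \<otimes>\<^bsub>R\<^esub> x \<in> I)"

definition maximal_left_ideal :: "('a, 'b) ring_scheme \<Rightarrow> 'a set \<Rightarrow> bool" where
  "maximal_left_ideal R I \<longleftrightarrow> left_ideal R I \<and> I \<noteq> carrier R \<and>
     (\<forall>K. left_ideal R K \<and> I \<subseteq> K \<and> K \<noteq> carrier R \<longrightarrow> K = I)"

definition jacobson :: "('a, 'b) ring_scheme \<Rightarrow> 'a set" where
  "jacobson R = {x \<in> carrier R. \<forall>I. maximal_left_ideal R I \<longrightarrow> x \<in> I}"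

definition division_ring_rec :: "('a, 'b) ring_scheme \<Rightarrow> bool" where
  "division_ring_rec D \<longleftrightarrow> ring D \<and> \<one>\<^bsub>D\<^esub> \<noteq> \<zero>\<^bsub>D\<^esub> \<and>
     (\<forall>x \<in> carrier D - {\<zero>\<^bsub>D\<^esub>}. x \<in> Units D)"

definition local_ring :: "('a, 'b) ring_scheme \<Rightarrow> bool" where
  "local_ring R \<longleftrightarrow> division_ring_rec (R Quot jacobson R)"

definition central :: "('a, 'b) ring_scheme \<Rightarrow> 'a \<Rightarrow> bool" where
  "central R s \<longleftrightarrow> s \<in> carrier R \<and> (\<forall>x \<in> carrier R. s \<otimes>\<^bsub>R\<^esub> x = x \<otimes>\<^bsub>R\<^esub> s)"

text \<open>The generalized matrix ring M_2(R;s); a matrix [a b; c d] is the tuple (a,b,c,d).\<close>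
fun M2s_mult :: "('a, 'b) ring_scheme \<Rightarrow> 'a \<Rightarrow> 'a \<times> 'a \<times> 'a \<times> 'a \<Rightarrow> 'a \<times> 'a \<times> 'a \<times> 'a \<Rightarrow> 'a \<times> 'a \<times> 'a \<times> 'a" where
  "M2s_mult R s (a, b, c, d) (a', b', c', d') =
        (a \<otimes>\<^bsub>R\<^esub> a' \<oplus>\<^bsub>R\<^esub> (s [^]\<^bsub>R\<^esub> (2::nat)) \<otimes>\<^bsub>R\<^esub> b \<otimes>\<^bsub>R\<^esub> c',
         a \<otimes>\<^bsub>R\<^esub> b' \<oplus>\<^bsub>R\<^esub> b \<otimes>\<^bsub>R\<^esub> d',
         c \<otimes>\<^bsub>R\<^esub> a' \<oplus>\<^bsub>R\<^esub> d \<otimes>\<^bsub>R\<^esub> c',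
         (s [^]\<^bsub>R\<^esub> (2::nat)) \<otimes>\<^bsub>R\<^esub> c \<otimes>\<^bsub>R\<^esub> b' \<oplus>\<^bsub>R\<^esub> d \<otimes>\<^bsub>R\<^esub> d')"

fun M2s_add :: "('a, 'b) ring_scheme \<Rightarrow> 'a \<times> 'a \<times> 'a \<times> 'a \<Rightarrow> 'a \<times> 'a \<times> 'a \<times> 'a \<Rightarrow> 'a \<times> 'a \<times> 'a \<times> 'a" where
  "M2s_add R (a, b, c, d) (a', b', c', d') =
        (a \<oplus>\<^bsub>R\<^esub> a', b \<oplus>\<^bsub>R\<^esub> b', c \<oplus>\<^bsub>R\<^esub> c', d \<oplus>\<^bsub>R\<^esub> d')"

definition M2s :: "('a, 'b) ring_scheme \<Rightarrow> 'a \<Rightarrow> ('a \<times> 'a \<times> 'a \<times> 'a) ring" where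
  "M2s R s = \<lparr>partial_object.carrier = carrier R \<times> carrier R \<times> carrier R \<times> carrier R,
     monoid.mult = M2s_mult R s,
     monoid.one = (\<one>\<^bsub>R\<^esub>, \<zero>\<^bsub>R\<^esub>, \<zero>\<^bsub>R\<^esub>, \<one>\<^bsub>R\<^esub>),
     ring.zero = (\<zero>\<^bsub>R\<^esub>, \<zero>\<^bsub>R\<^esub>, \<zero>\<^bsub>R\<^esub>, \<zero>\<^bsub>R\<^esub>),
     ring.add = M2s_add R\<rparr>"

definition strongly_clean :: "('a, 'b) ring_scheme \<Rightarrow> 'a \<Rightarrow> bool" where
  "strongly_clean T a \<longleftrightarrow> (\<exists>e \<in> carrier T. e \<otimes>\<^bsub>T\<^esub> e = e \<and>
      a \<otimes>\<^bsub>T\<^esub> e = e \<otimes>\<^bsub>T\<^esub> a \<and> a \<ominus>\<^bsub>T\<^esub> e \<in> Units T)"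

definition strongly_J_clean :: "('a, 'b) ring_scheme \<Rightarrow> 'a \<Rightarrow> bool" where
  "strongly_J_clean T a \<longleftrightarrow> (\<exists>e \<in> carrier T. e \<otimes>\<^bsub>T\<^esub> e = e \<and>
      a \<otimes>\<^bsub>T\<^esub> e = e \<otimes>\<^bsub>T\<^esub> a \<and> a \<ominus>\<^bsub>T\<^esub> e \<in> jacobson T)"

end

theory Submission
  imports Defs
begin

text \<open>
  In any ring, units, elements \<open>A\<close> with \<open>1 - A\<close> a unit, and strongly \<open>J\<close>-clean elements
  are strongly clean: if \<open>e\<close> is idempotent with \<open>A - e \<in> J\<close>, then \<open>A - (1 - e)\<close> is a unit.
  Conversely, let \<open>E\<close> be an idempotent commuting with \<open>A\<close>. If \<open>E\<close> is \<open>0\<close> or \<open>1\<close> we are in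
  case (1) or (2). Otherwise, as \<open>R\<close> is local, \<open>E\<close> or \<open>1 - E\<close> has an invertible corner entry,
  and a block LDU factorisation shows that such a nontrivial idempotent is conjugate to
  \<open>diag(1,0)\<close>. The same conjugation makes \<open>A\<close> commute with \<open>diag(1,0)\<close>, i.e. diagonal. Every
  diagonal matrix over a local ring satisfies (1), (2) or (3), because each entry lies in
  \<open>J(R)\<close>, in \<open>1 + J(R)\<close> or in \<open>U(R) \<inter> (1 + U(R))\<close>, and diagonal matrices with entries
  in \<open>J(R)\<close> lie in \<open>J(M\<^sub>2(R;s))\<close>. All three conditions are invariant under conjugation.
\<close>

section \<open>Units, conjugation and idempotents\<close>

context ring
begin

lemma UnitsI:
  assumes "x \<in> carrier R" "y \<in> carrier R" "x \<otimes> y = \<one>" "y \<otimes> x = \<one>"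
  shows "x \<in> Units R"
  using assms unfolding Units_def by blast

lemma Units_of_left_right_inverse:
  assumes "x \<in> carrier R" "p \<in> carrier R" "q \<in> carrier R" "p \<otimes> x = \<one>" "x \<otimes> q = \<one>"
  shows "x \<in> Units R"
proof -
  have "p = p \<otimes> (x \<otimes> q)" using assms by simp
  also have "\<dots> = (p \<otimes> x) \<otimes> q" using assms(1-3) by (simp add: m_assoc)
  also have "\<dots> = q" using assms by simp
  finally show ?thesis using assms by (intro UnitsI[of x p]) auto
qed

lemma Units_r_cancel:
  assumes "x \<in> Units R" "y \<in> carrier R" "z \<in> carrier R"
  shows "y \<otimes> x = z \<otimes> x \<longleftrightarrow> y = z"
proof
  assume "y \<otimes> x = z \<otimes> x"
  then have "y \<otimes> (x \<otimes> inv x) = z \<otimes> (x \<otimes> inv x)"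
    using assms by (simp add: m_assoc[symmetric] Units_closed del: Units_r_inv)
  then show "y = z" using assms by simp
qed simp

lemma Units_mult_cancel_both:
  assumes "l \<in> Units R" "u \<in> Units R" "x \<in> carrier R" "y \<in> carrier R"
  shows "l \<otimes> x \<otimes> u = l \<otimes> y \<otimes> u \<longleftrightarrow> x = y"
  using assms by (simp add: Units_r_cancel Units_closed)

lemma Units_conj_mult:
  "\<lbrakk>u \<in> Units R; a \<in> carrier R; b \<in> carrier R\<rbrakk>
    \<Longrightarrow> u \<otimes> (a \<otimes> b) \<otimes> inv u = (u \<otimes> a \<otimes> inv u) \<otimes> (u \<otimes> b \<otimes> inv u)"
  by (simp add: m_assoc Units_closed) (simp add: m_assoc[symmetric] Units_closed)

lemma Units_conj_minus:
  "\<lbrakk>u \<in> Units R; a \<in> carrier R; b \<in> carrier R\<rbrakk>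
    \<Longrightarrow> u \<otimes> (a \<ominus> b) \<otimes> inv u = u \<otimes> a \<otimes> inv u \<ominus> u \<otimes> b \<otimes> inv u"
  by (simp add: a_minus_def r_distr l_distr r_minus l_minus Units_closed)

lemma Units_conj_one: "u \<in> Units R \<Longrightarrow> u \<otimes> \<one> \<otimes> inv u = \<one>"
  by (simp add: Units_closed)

lemma Units_conj_cancel:
  "\<lbrakk>u \<in> Units R; a \<in> carrier R\<rbrakk> \<Longrightarrow> inv u \<otimes> (u \<otimes> a \<otimes> inv u) \<otimes> inv (inv u) = a"
  by (simp add: m_assoc Units_closed) (simp add: m_assoc[symmetric] Units_closed)

lemma Units_idempotent_eq_one:
  assumes "e \<in> Units R" "e \<otimes> e = e"
  shows "e = \<one>"
proof -
  have "e = (inv e \<otimes> e) \<otimes> e" using assms by (simp add: Units_closed)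
  also have "\<dots> = inv e \<otimes> (e \<otimes> e)" using assms by (intro m_assoc) auto
  also have "\<dots> = \<one>" using assms by simp
  finally show ?thesis .
qed

lemma idempotent_mult_one_minus:
  assumes "e \<in> carrier R" "e \<otimes> e = e"
  shows "e \<otimes> (\<one> \<ominus> e) = \<zero>" "(\<one> \<ominus> e) \<otimes> e = \<zero>" "(\<one> \<ominus> e) \<otimes> (\<one> \<ominus> e) = \<one> \<ominus> e"
  using assms by (simp_all add: a_minus_def r_distr l_distr r_minus l_minus r_neg)

lemma one_minus_eq_one_iff: "e \<in> carrier R \<Longrightarrow> \<one> \<ominus> e = \<one> \<longleftrightarrow> e = \<zero>"
  by (simp add: a_minus_def)

lemma commute_one_minus:
  "\<lbrakk>a \<in> carrier R; e \<in> carrier R; a \<otimes> e = e \<otimes> a\<rbrakk> \<Longrightarrow> a \<otimes> (\<one> \<ominus> e) = (\<one> \<ominus> e) \<otimes> a"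
  by (simp add: a_minus_def r_distr l_distr r_minus l_minus)

lemma one_minus_Units_iff:
  assumes "a \<in> carrier R"
  shows "\<one> \<ominus> a \<in> Units R \<longleftrightarrow> a \<ominus> \<one> \<in> Units R"
proof -
  have "a \<ominus> \<one> = \<ominus> \<one> \<otimes> (\<one> \<ominus> a)" "\<one> \<ominus> a = \<ominus> \<one> \<otimes> (a \<ominus> \<one>)"
    using assms by (simp_all add: a_minus_def r_distr l_minus a_comm)
  then show ?thesis using Units_minus_one_closed Units_m_closed by metis
qed

section \<open>The Jacobson radical\<close>

lemma additive_subgroup_closedI:
  assumes "H \<subseteq> carrier R" "\<zero> \<in> H" "\<And>x y. x \<in> H \<Longrightarrow> y \<in> H \<Longrightarrow> x \<oplus> y \<in> H"
    "\<And>x. x \<in> H \<Longrightarrow> \<ominus> x \<in> H"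
  shows "additive_subgroup H R"
  by (rule additive_subgroupI, rule add.subgroupI) (use assms in \<open>auto simp: a_inv_def\<close>)

lemma left_ideal_subset: "left_ideal R I \<Longrightarrow> I \<subseteq> carrier R"
  by (auto simp: left_ideal_def additive_subgroup.a_Hcarr)

lemma left_ideal_zero: "left_ideal R {\<zero>}"
  by (auto simp: left_ideal_def intro: additive_subgroup_closedI)

lemma left_ideal_one_imp_carrier: "left_ideal R I \<Longrightarrow> \<one> \<in> I \<Longrightarrow> I = carrier R"
  using left_ideal_subset[of I] by (auto simp: left_ideal_def) (metis r_one one_closed)

lemma left_ideal_add_principal:
  assumes M: "left_ideal R M" and x: "x \<in> carrier R"
  shows "left_ideal R {m \<oplus> y \<otimes> x | m y. m \<in> M \<and> y \<in> carrier R}" (is "left_ideal R ?K")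
proof -
  have Msub: "additive_subgroup M R" and Mc: "M \<subseteq> carrier R"
    using M left_ideal_subset by (auto simp: left_ideal_def)
  note Msub_rules = additive_subgroup.zero_closed[OF Msub] additive_subgroup.a_closed[OF Msub]
    additive_subgroup.a_inv_closed[OF Msub]
  show ?thesis
    unfolding left_ideal_def
  proof (intro conjI ballI)
    show "additive_subgroup ?K R"
    proof (rule additive_subgroup_closedI)
      show "\<zero> \<in> ?K" using x Msub_rules by (force intro!: exI[of _ \<zero>])
    next
      fix u v assume "u \<in> ?K" "v \<in> ?K"
      then obtain m y m' y' where "u = m \<oplus> y \<otimes> x" "v = m' \<oplus> y' \<otimes> x"
        "m \<in> M" "y \<in> carrier R" "m' \<in> M" "y' \<in> carrier R" by blast
      moreover from this have "u \<oplus> v = (m \<oplus> m') \<oplus> (y \<oplus> y') \<otimes> x"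
        using x Mc by (simp add: l_distr a_ac subsetD)
      ultimately show "u \<oplus> v \<in> ?K" using Msub_rules by blast
    next
      fix u assume "u \<in> ?K"
      then obtain m y where "u = m \<oplus> y \<otimes> x" "m \<in> M" "y \<in> carrier R" by blast
      moreover from this have "\<ominus> u = \<ominus> m \<oplus> (\<ominus> y) \<otimes> x"
        using x Mc by (simp add: minus_add l_minus subsetD)
      ultimately show "\<ominus> u \<in> ?K" using Msub_rules by blast
    qed (use x Mc in auto)
  next
    fix a u assume a: "a \<in> carrier R" and "u \<in> ?K"
    then obtain m y where "u = m \<oplus> y \<otimes> x" "m \<in> M" "y \<in> carrier R" by blast
    moreover from this have "a \<otimes> u = a \<otimes> m \<oplus> (a \<otimes> y) \<otimes> x"
      using a x Mc by (simp add: r_distr m_assoc subsetD)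
    ultimately show "a \<otimes> u \<in> ?K" using a M by (auto simp: left_ideal_def)
  qed
qed

lemma left_ideal_Union_chain:
  assumes "C \<noteq> {}" and li: "\<And>I. I \<in> C \<Longrightarrow> left_ideal R I"
    and chain: "\<And>I K. I \<in> C \<Longrightarrow> K \<in> C \<Longrightarrow> I \<subseteq> K \<or> K \<subseteq> I"
  shows "left_ideal R (\<Union>C)"
  unfolding left_ideal_def
proof (intro conjI ballI)
  have sub: "additive_subgroup I R" if "I \<in> C" for I
    using li[OF that] by (simp add: left_ideal_def)
  show "additive_subgroup (\<Union>C) R"
  proof (rule additive_subgroup_closedI)
    show "\<Union>C \<subseteq> carrier R" using li left_ideal_subset by blast
    show "\<zero> \<in> \<Union>C" using \<open>C \<noteq> {}\<close> sub additive_subgroup.zero_closed by (metis UnionI ex_in_conv)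
    show "\<ominus> x \<in> \<Union>C" if "x \<in> \<Union>C" for x
      using that sub additive_subgroup.a_inv_closed by (metis UnionE UnionI)
    fix x y assume "x \<in> \<Union>C" "y \<in> \<Union>C"
    then obtain I K where IK: "I \<in> C" "K \<in> C" "x \<in> I" "y \<in> K" by blast
    have closed: "x \<oplus> y \<in> \<Union>C" if "x \<in> K" "y \<in> K" "K \<in> C" for K
      using that sub additive_subgroup.a_closed by (metis UnionI)
    from IK chain[of I K] closed[of I] closed[of K] show "x \<oplus> y \<in> \<Union>C"
      by auto
  qed
qed (use li in \<open>auto simp: left_ideal_def\<close>)

lemma exists_maximal_left_ideal:
  assumes L: "left_ideal R L" and "\<one> \<notin> L"
  shows "\<exists>M. maximal_left_ideal R M \<and> L \<subseteq> M"
proof -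
  let ?S = "{K. left_ideal R K \<and> L \<subseteq> K \<and> \<one> \<notin> K}"
  have "\<exists>U\<in>?S. \<forall>K\<in>C. K \<subseteq> U" if "C \<in> chains ?S" for C
  proof (cases "C = {}")
    case False
    with that have "\<Union>C \<in> ?S"
      by (auto simp: chains_def chain_subset_def intro!: left_ideal_Union_chain)
    then show ?thesis by blast
  qed (use assms in auto)
  then obtain M where M: "M \<in> ?S" and max: "\<forall>K\<in>?S. M \<subseteq> K \<longrightarrow> K = M"
    using Zorn_Lemma2[of ?S] by blast
  have "maximal_left_ideal R M"
    unfolding maximal_left_ideal_def
    using M max left_ideal_one_imp_carrier by (auto 4 3)
  with M show ?thesis by blast
qed

lemma maximal_left_ideal_if_not_left_invertible:
  assumes x: "x \<in> carrier R" and "\<not> (\<exists>y\<in>carrier R. y \<otimes> x = \<one>)"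
  shows "\<exists>M. maximal_left_ideal R M \<and> x \<in> M"
proof -
  let ?L = "{m \<oplus> y \<otimes> x | m y. m \<in> {\<zero>} \<and> y \<in> carrier R}"
  have "left_ideal R ?L" using left_ideal_add_principal[OF left_ideal_zero x] .
  moreover have "\<one> \<notin> ?L" using assms by auto
  moreover have "x = \<zero> \<oplus> \<one> \<otimes> x" using x by simp
  then have "x \<in> ?L" by blast
  ultimately show ?thesis using exists_maximal_left_ideal by blast
qed

lemma jacobson_subset: "jacobson R \<subseteq> carrier R"
  by (auto simp: jacobson_def)

lemma additive_subgroup_jacobson: "additive_subgroup (jacobson R) R"
  by (rule additive_subgroup_closedI)
    (auto simp: jacobson_def maximal_left_ideal_def left_ideal_def additive_subgroup.a_closed
      additive_subgroup.a_inv_closed additive_subgroup.zero_closed)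

lemma jacobson_l_mult_closed: "a \<in> carrier R \<Longrightarrow> x \<in> jacobson R \<Longrightarrow> a \<otimes> x \<in> jacobson R"
  by (auto simp: jacobson_def maximal_left_ideal_def left_ideal_def)

lemma one_plus_jacobson_left_invertible:
  assumes x: "x \<in> jacobson R"
  shows "\<exists>v\<in>carrier R. v \<otimes> (\<one> \<oplus> x) = \<one>"
proof (rule ccontr)
  have xc: "x \<in> carrier R" using x jacobson_subset by blast
  assume "\<not> ?thesis"
  then obtain M where M: "maximal_left_ideal R M" "\<one> \<oplus> x \<in> M"
    using maximal_left_ideal_if_not_left_invertible[of "\<one> \<oplus> x"] xc by auto
  have sub: "additive_subgroup M R" and "x \<in> M"
    using M(1) x by (auto simp: maximal_left_ideal_def left_ideal_def jacobson_def)
  then have "(\<one> \<oplus> x) \<oplus> \<ominus> x \<in> M"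
    using M(2) additive_subgroup.a_closed additive_subgroup.a_inv_closed by metis
  then have "\<one> \<in> M" using xc by (simp add: a_assoc r_neg)
  then show False
    using M(1) left_ideal_one_imp_carrier by (auto simp: maximal_left_ideal_def)
qed

lemma one_plus_jacobson_Units:
  assumes x: "x \<in> jacobson R"
  shows "\<one> \<oplus> x \<in> Units R"
proof -
  have xc: "x \<in> carrier R" using x jacobson_subset by blast
  obtain v where v: "v \<in> carrier R" "v \<otimes> (\<one> \<oplus> x) = \<one>"
    using one_plus_jacobson_left_invertible[OF x] by blast
  \<comment> \<open>\<open>v = \<one> \<oplus> \<ominus> (v \<otimes> x)\<close> is again of the form \<open>\<one> + J\<close>, so \<open>v\<close> has a left inverse too.\<close>
  have "v \<oplus> v \<otimes> x = \<one>" using v xc by (simp add: r_distr)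
  then have v_eq: "v = \<one> \<oplus> \<ominus> (v \<otimes> x)" using v xc
    by (metis a_assoc add.inv_closed m_closed r_neg r_zero)
  have "\<ominus> (v \<otimes> x) \<in> jacobson R"
    using additive_subgroup.a_inv_closed[OF additive_subgroup_jacobson jacobson_l_mult_closed[OF v(1) x]] .
  then obtain w where w: "w \<in> carrier R" "w \<otimes> v = \<one>"
    using one_plus_jacobson_left_invertible v_eq by metis
  have "w = w \<otimes> (v \<otimes> (\<one> \<oplus> x))" using v w by simp
  also have "\<dots> = (w \<otimes> v) \<otimes> (\<one> \<oplus> x)" using v(1) w(1) xc by (simp add: m_assoc)
  also have "\<dots> = \<one> \<oplus> x" using w xc by simp
  finally have "w = \<one> \<oplus> x" .
  then show ?thesis using v w xc unfolding Units_def by auto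
qed

lemma one_minus_jacobson_Units: "x \<in> jacobson R \<Longrightarrow> \<one> \<ominus> x \<in> Units R"
  unfolding a_minus_def
  by (rule one_plus_jacobson_Units) (rule additive_subgroup.a_inv_closed[OF additive_subgroup_jacobson])

lemma jacobsonI:
  assumes x: "x \<in> carrier R"
    and inv: "\<And>y. y \<in> carrier R \<Longrightarrow> \<exists>w\<in>carrier R. w \<otimes> (\<one> \<ominus> y \<otimes> x) = \<one>"
  shows "x \<in> jacobson R"
  unfolding jacobson_def
proof (intro CollectI conjI allI impI x)
  fix M assume M: "maximal_left_ideal R M"
  show "x \<in> M"
  proof (rule ccontr)
    assume "x \<notin> M"
    have li: "left_ideal R M" and Mc: "M \<subseteq> carrier R"
      using M left_ideal_subset by (auto simp: maximal_left_ideal_def)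
    let ?K = "{m \<oplus> y \<otimes> x | m y. m \<in> M \<and> y \<in> carrier R}"
    have "m = m \<oplus> \<zero> \<otimes> x" if "m \<in> M" for m using that x Mc by auto
    then have "M \<subseteq> ?K" by blast
    moreover have "\<zero> \<in> M" "x = \<zero> \<oplus> \<one> \<otimes> x"
      using x li additive_subgroup.zero_closed by (auto simp: left_ideal_def)
    then have "x \<in> ?K" by blast
    ultimately have "?K = carrier R"
      using M \<open>x \<notin> M\<close> left_ideal_add_principal[OF li x] unfolding maximal_left_ideal_def by blast
    then obtain m y where my: "\<one> = m \<oplus> y \<otimes> x" "m \<in> M" "y \<in> carrier R"
      using one_closed by blast
    then have "m = \<one> \<ominus> y \<otimes> x"
      using x Mc by (metis a_minus_def add.inv_solve_right m_closed one_closed subsetD)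
    then obtain w where "w \<in> carrier R" "w \<otimes> m = \<one>" using inv my(3) by blast
    then have "\<one> \<in> M" using li my(2) by (metis left_ideal_def)
    then show False using M left_ideal_one_imp_carrier by (auto simp: maximal_left_ideal_def)
  qed
qed

lemma jacobson_conj:
  assumes u: "u \<in> Units R" and x: "x \<in> jacobson R"
  shows "u \<otimes> x \<otimes> inv u \<in> jacobson R"
proof (rule jacobsonI)
  have xc: "x \<in> carrier R" using x jacobson_subset by blast
  show "u \<otimes> x \<otimes> inv u \<in> carrier R" using u xc by auto
  fix y assume y: "y \<in> carrier R"
  define y' where "y' = inv u \<otimes> y \<otimes> u"
  have y'c: "y' \<in> carrier R" using u y by (auto simp: y'_def)
  have "u \<otimes> y' \<otimes> inv u = y"
    using u y by (simp add: y'_def m_assoc Units_closed) (simp add: m_assoc[symmetric] Units_closed)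
  then have "u \<otimes> (\<one> \<ominus> y' \<otimes> x) \<otimes> inv u = \<one> \<ominus> y \<otimes> (u \<otimes> x \<otimes> inv u)"
    using u y'c xc by (simp add: Units_conj_minus Units_conj_mult Units_conj_one)
  moreover have "\<one> \<ominus> y' \<otimes> x \<in> Units R"
    using one_minus_jacobson_Units jacobson_l_mult_closed[OF y'c x] by blast
  ultimately have "\<one> \<ominus> y \<otimes> (u \<otimes> x \<otimes> inv u) \<in> Units R"
    using u by (metis Units_inv_Units Units_m_closed)
  then show "\<exists>w\<in>carrier R. w \<otimes> (\<one> \<ominus> y \<otimes> (u \<otimes> x \<otimes> inv u)) = \<one>"
    by (intro bexI[of _ "inv (\<one> \<ominus> y \<otimes> (u \<otimes> x \<otimes> inv u))"]) auto
qed

section \<open>Local rings\<close>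

lemma local_ring_inverse_mod_jacobson:
  assumes L: "local_ring R" and x: "x \<in> carrier R" "x \<notin> jacobson R"
  obtains y where "y \<in> carrier R" "\<exists>h\<in>jacobson R. y \<otimes> x = \<one> \<oplus> h" "\<exists>h\<in>jacobson R. x \<otimes> y = \<one> \<oplus> h"
proof -
  let ?J = "jacobson R"
  let ?Q = "R Quot ?J"
  have units: "\<forall>C \<in> carrier ?Q - {\<zero>\<^bsub>?Q\<^esub>}. C \<in> Units ?Q"
    using L by (simp add: local_ring_def division_ring_rec_def)
  have coset: "?J +> y = {h \<oplus> y | h. h \<in> ?J}" for y
    by (auto simp: a_r_coset_def r_coset_def)
  have mem: "y \<in> ?J +> y" if "y \<in> carrier R" for y
    using that additive_subgroup.zero_closed[OF additive_subgroup_jacobson] coset[of y]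
    by (auto intro!: exI[of _ \<zero>])
  have carrier_Q: "carrier ?Q = {?J +> y | y. y \<in> carrier R}"
    by (auto simp: FactRing_def A_RCOSETS_def RCOSETS_def a_r_coset_def)
  have product_one: "\<exists>h\<in>?J. y \<otimes> z = \<one> \<oplus> h"
    if "y \<in> carrier R" "z \<in> carrier R" "(?J +> y) \<otimes>\<^bsub>?Q\<^esub> (?J +> z) = \<one>\<^bsub>?Q\<^esub>" for y z
  proof -
    have "?J +> (y \<otimes> z) \<subseteq> (?J +> y) \<otimes>\<^bsub>?Q\<^esub> (?J +> z)"
      using mem that(1,2) by (auto simp: FactRing_def rcoset_mult_def)
    then have "y \<otimes> z \<in> ?J +> \<one>" using that mem[of "y \<otimes> z"] by (auto simp: FactRing_def)
    then show ?thesis using coset[of \<one>] jacobson_subset by (auto simp: a_comm subset_iff)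
  qed
  have "?J +> x \<noteq> \<zero>\<^bsub>?Q\<^esub>" using mem[OF x(1)] x(2) by (auto simp: FactRing_def)
  moreover have "?J +> x \<in> carrier ?Q" using carrier_Q x by blast
  ultimately obtain C where C: "C \<in> carrier ?Q"
    "C \<otimes>\<^bsub>?Q\<^esub> (?J +> x) = \<one>\<^bsub>?Q\<^esub>" "(?J +> x) \<otimes>\<^bsub>?Q\<^esub> C = \<one>\<^bsub>?Q\<^esub>"
    using units unfolding Units_def by blast
  then obtain y where y: "y \<in> carrier R" "C = ?J +> y" using carrier_Q by blast
  show ?thesis
  proof (rule that[OF y(1)])
    show "\<exists>h\<in>?J. y \<otimes> x = \<one> \<oplus> h" using product_one[OF y(1) x(1)] C(2) y(2) by simp
    show "\<exists>h\<in>?J. x \<otimes> y = \<one> \<oplus> h" using product_one[OF x(1) y(1)] C(3) y(2) by simp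
  qed
qed

lemma local_ring_Units_or_jacobson:
  assumes L: "local_ring R" and x: "x \<in> carrier R"
  shows "x \<in> Units R \<or> x \<in> jacobson R"
proof (rule disjCI)
  assume "x \<notin> jacobson R"
  then obtain y where y: "y \<in> carrier R"
    and "\<exists>h\<in>jacobson R. y \<otimes> x = \<one> \<oplus> h" "\<exists>h\<in>jacobson R. x \<otimes> y = \<one> \<oplus> h"
    using local_ring_inverse_mod_jacobson[OF L x] by blast
  then have yx: "y \<otimes> x \<in> Units R" and xy: "x \<otimes> y \<in> Units R"
    using one_plus_jacobson_Units by metis+
  show "x \<in> Units R"
  proof (rule Units_of_left_right_inverse)
    show "inv (y \<otimes> x) \<otimes> y \<otimes> x = \<one>" using yx x y by (simp add: m_assoc)
    show "x \<otimes> (y \<otimes> inv (x \<otimes> y)) = \<one>" using xy x y by (simp add: m_assoc[symmetric])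
  qed (use x y yx xy in auto)
qed

lemma local_ring_cases:
  assumes L: "local_ring R" and z: "z \<in> carrier R"
  shows "(z \<in> jacobson R \<and> \<one> \<ominus> z \<in> Units R) \<or> (z \<ominus> \<one> \<in> jacobson R \<and> z \<in> Units R)
    \<or> (z \<in> Units R \<and> \<one> \<ominus> z \<in> Units R)"
proof -
  have "z \<ominus> \<one> = \<ominus> (\<one> \<ominus> z)" using z by (simp add: a_minus_def minus_add a_comm)
  then have "\<one> \<ominus> z \<in> jacobson R \<Longrightarrow> z \<ominus> \<one> \<in> jacobson R"
    using additive_subgroup.a_inv_closed[OF additive_subgroup_jacobson] by simp
  then show ?thesis
    using local_ring_Units_or_jacobson[OF L] one_minus_jacobson_Units z by blast
qed

lemma local_ring_idempotent:
  assumes L: "local_ring R" and e: "e \<in> carrier R" "e \<otimes> e = e"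
  shows "e = \<zero> \<or> e = \<one>"
proof (cases "e \<in> Units R")
  case True
  then show ?thesis using Units_idempotent_eq_one e by blast
next
  case False
  then have u: "\<one> \<ominus> e \<in> Units R"
    using local_ring_Units_or_jacobson[OF L e(1)] one_minus_jacobson_Units by blast
  have "e = e \<otimes> ((\<one> \<ominus> e) \<otimes> inv (\<one> \<ominus> e))" using u e by simp
  also have "\<dots> = (e \<otimes> (\<one> \<ominus> e)) \<otimes> inv (\<one> \<ominus> e)" using u e by (intro m_assoc[symmetric]) auto
  also have "\<dots> = \<zero>" using u idempotent_mult_one_minus[OF e] by simp
  finally show ?thesis by simp
qed

section \<open>Strongly clean elements\<close>

lemma strongly_clean_if_Units: "a \<in> Units R \<Longrightarrow> strongly_clean R a"
  unfolding strongly_clean_def by (intro bexI[of _ \<zero>]) (auto simp: a_minus_def Units_closed)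

lemma strongly_clean_if_one_minus_Units:
  assumes a: "a \<in> carrier R" and "\<one> \<ominus> a \<in> Units R"
  shows "strongly_clean R a"
  using assms one_minus_Units_iff[OF a] unfolding strongly_clean_def by (intro bexI[of _ \<one>]) auto

lemma strongly_clean_if_strongly_J_clean:
  assumes a: "a \<in> carrier R" and "strongly_J_clean R a"
  shows "strongly_clean R a"
proof -
  obtain e where e: "e \<in> carrier R" "e \<otimes> e = e" "a \<otimes> e = e \<otimes> a" "a \<ominus> e \<in> jacobson R"
    using assms by (auto simp: strongly_J_clean_def)
  define f where "f = \<one> \<ominus> e"
  have f: "f \<in> carrier R" "f \<otimes> f = f" "a \<otimes> f = f \<otimes> a"
    using e a idempotent_mult_one_minus[OF e(1,2)] commute_one_minus[OF a e(1,3)]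
    by (simp_all add: f_def)
  \<comment> \<open>\<open>a - f = v (\<one> + v (a - e))\<close> with the involution \<open>v = e - f\<close>.\<close>
  define v where "v = e \<ominus> f"
  have vc: "v \<in> carrier R" using e f by (simp add: v_def)
  have ef: "e \<otimes> f = \<zero>" "f \<otimes> e = \<zero>"
    using idempotent_mult_one_minus[OF e(1,2)] by (simp_all add: f_def)
  have "v \<otimes> v = e \<otimes> e \<ominus> e \<otimes> f \<ominus> (f \<otimes> e \<ominus> f \<otimes> f)"
    using e f by (simp add: v_def a_minus_def l_distr r_distr l_minus r_minus minus_add a_ac)
  also have "\<dots> = e \<oplus> f" using e f ef by (simp add: a_minus_def)
  also have "\<dots> = \<one>" using e by (simp add: f_def a_minus_def) (metis a_lcomm add.inv_closed one_closed r_neg r_zero)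
  finally have vv: "v \<otimes> v = \<one>" .
  then have vU: "v \<in> Units R" using vc by (auto simp: Units_def)
  have xc: "a \<ominus> e \<in> carrier R" using a e by simp
  have "v \<otimes> (\<one> \<oplus> v \<otimes> (a \<ominus> e)) = v \<oplus> (a \<ominus> e)"
    using vv vc xc by (simp add: r_distr m_assoc[symmetric])
  also have "\<dots> = a \<ominus> f"
    using e a f(1) by (simp add: v_def f_def a_minus_def minus_add a_ac r_neg2)
  finally have "a \<ominus> f = v \<otimes> (\<one> \<oplus> v \<otimes> (a \<ominus> e))" by simp
  moreover have "\<one> \<oplus> v \<otimes> (a \<ominus> e) \<in> Units R"
    using one_plus_jacobson_Units jacobson_l_mult_closed[OF vc e(4)] by blast
  ultimately have "a \<ominus> f \<in> Units R" using vU by simp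
  then show ?thesis using f unfolding strongly_clean_def by blast
qed

lemma strongly_J_clean_conj:
  assumes u: "u \<in> Units R" and a: "a \<in> carrier R" and "strongly_J_clean R a"
  shows "strongly_J_clean R (u \<otimes> a \<otimes> inv u)"
proof -
  obtain e where e: "e \<in> carrier R" "e \<otimes> e = e" "a \<otimes> e = e \<otimes> a" "a \<ominus> e \<in> jacobson R"
    using assms by (auto simp: strongly_J_clean_def)
  let ?e = "u \<otimes> e \<otimes> inv u" and ?a = "u \<otimes> a \<otimes> inv u"
  have "?e \<in> carrier R" using u e by auto
  moreover have "?e \<otimes> ?e = ?e" "?a \<otimes> ?e = ?e \<otimes> ?a"
    using u a e by (simp_all add: Units_conj_mult[symmetric])
  moreover have "?a \<ominus> ?e \<in> jacobson R"
    using jacobson_conj[OF u e(4)] u a e by (simp add: Units_conj_minus)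
  ultimately show ?thesis unfolding strongly_J_clean_def by blast
qed

lemma clean_trichotomy_conj:
  assumes u: "u \<in> Units R" and a: "a \<in> carrier R"
    and "u \<otimes> a \<otimes> inv u \<in> Units R \<or> \<one> \<ominus> u \<otimes> a \<otimes> inv u \<in> Units R
       \<or> strongly_J_clean R (u \<otimes> a \<otimes> inv u)"
  shows "a \<in> Units R \<or> \<one> \<ominus> a \<in> Units R \<or> strongly_J_clean R a"
proof -
  let ?v = "inv u" and ?b = "u \<otimes> a \<otimes> inv u"
  have v: "?v \<in> Units R" and b: "?b \<in> carrier R" using u a by auto
  have a_eq: "a = ?v \<otimes> ?b \<otimes> inv ?v" using Units_conj_cancel[OF u a] by simp
  have "?v \<otimes> (\<one> \<ominus> ?b) \<otimes> inv ?v = \<one> \<ominus> a"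
    using v b by (simp add: Units_conj_minus Units_conj_one a_eq[symmetric])
  then show ?thesis
    using assms(3) strongly_J_clean_conj[OF v b] a_eq v b
    by (metis Units_inv_Units Units_m_closed)
qed

section \<open>The ring \<open>M\<^sub>2(R;s)\<close>\<close>

lemma M2s_simps:
  "carrier (M2s R s) = carrier R \<times> carrier R \<times> carrier R \<times> carrier R"
  "\<one>\<^bsub>M2s R s\<^esub> = (\<one>, \<zero>, \<zero>, \<one>)"
  "\<zero>\<^bsub>M2s R s\<^esub> = (\<zero>, \<zero>, \<zero>, \<zero>)"
  "(a, b, c, d) \<otimes>\<^bsub>M2s R s\<^esub> (a', b', c', d') =
     (a \<otimes> a' \<oplus> s [^] (2::nat) \<otimes> b \<otimes> c', a \<otimes> b' \<oplus> b \<otimes> d',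
      c \<otimes> a' \<oplus> d \<otimes> c', s [^] (2::nat) \<otimes> c \<otimes> b' \<oplus> d \<otimes> d')"
  "(a, b, c, d) \<oplus>\<^bsub>M2s R s\<^esub> (a', b', c', d') = (a \<oplus> a', b \<oplus> b', c \<oplus> c', d \<oplus> d')"
  by (simp_all add: M2s_def)

lemma ring_M2s:
  assumes s: "central R s"
  shows "ring (M2s R s)"
proof -
  have t: "s [^] (2::nat) \<in> carrier R" using s by (simp add: central_def)
  have comm: "x \<otimes> s [^] (2::nat) = s [^] (2::nat) \<otimes> x" if "x \<in> carrier R" for x
    using that s group_commutes_pow by (auto simp: central_def)
  have lcomm: "x \<otimes> (s [^] (2::nat) \<otimes> y) = s [^] (2::nat) \<otimes> (x \<otimes> y)"
    if "x \<in> carrier R" "y \<in> carrier R" for x y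
    using that t comm by (simp add: m_assoc[symmetric])
  show ?thesis
  proof (rule ringI)
    show "abelian_group (M2s R s)"
    proof (rule abelian_groupI)
      fix x assume "x \<in> carrier (M2s R s)"
      then show "\<exists>y\<in>carrier (M2s R s). y \<oplus>\<^bsub>M2s R s\<^esub> x = \<zero>\<^bsub>M2s R s\<^esub>"
        by (auto simp: M2s_simps l_neg intro!: bexI[of _ "(\<ominus> fst x, \<ominus> fst (snd x),
            \<ominus> fst (snd (snd x)), \<ominus> snd (snd (snd x)))"])
    qed (auto simp: M2s_simps a_ac)
    show "monoid (M2s R s)"
      by (rule monoidI) (auto simp: M2s_simps t l_distr r_distr m_assoc a_ac comm lcomm)
  qed (auto simp: M2s_simps t l_distr r_distr a_ac)
qed

end

locale M2s_ring = ring +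
  fixes s
  assumes central_s: "central R s"
begin

sublocale M: ring "M2s R s"
  by (rule ring_M2s[OF central_s])

lemma sq_closed [simp]: "s [^] (2::nat) \<in> carrier R"
  using central_s by (simp add: central_def)

lemma M2s_a_inv:
  "\<lbrakk>a \<in> carrier R; b \<in> carrier R; c \<in> carrier R; d \<in> carrier R\<rbrakk>
    \<Longrightarrow> \<ominus>\<^bsub>M2s R s\<^esub> (a, b, c, d) = (\<ominus> a, \<ominus> b, \<ominus> c, \<ominus> d)"
  by (rule M.minus_equality) (simp_all add: M2s_simps l_neg)

lemma M2s_minus:
  "\<lbrakk>a \<in> carrier R; b \<in> carrier R; c \<in> carrier R; d \<in> carrier R;
    a' \<in> carrier R; b' \<in> carrier R; c' \<in> carrier R; d' \<in> carrier R\<rbrakk>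
    \<Longrightarrow> (a, b, c, d) \<ominus>\<^bsub>M2s R s\<^esub> (a', b', c', d') = (a \<ominus> a', b \<ominus> b', c \<ominus> c', d \<ominus> d')"
  by (simp add: a_minus_def M2s_a_inv M2s_simps)

lemma M2s_diag_Units:
  "x \<in> Units R \<Longrightarrow> y \<in> Units R \<Longrightarrow> (x, \<zero>, \<zero>, y) \<in> Units (M2s R s)"
  by (rule M.UnitsI[of _ "(inv x, \<zero>, \<zero>, inv y)"]) (auto simp: M2s_simps)

lemma M2s_lower_Units: "v \<in> carrier R \<Longrightarrow> (\<one>, \<zero>, v, \<one>) \<in> Units (M2s R s)"
  by (rule M.UnitsI[of _ "(\<one>, \<zero>, \<ominus> v, \<one>)"]) (auto simp: M2s_simps l_neg r_neg)

lemma M2s_upper_Units: "v \<in> carrier R \<Longrightarrow> (\<one>, v, \<zero>, \<one>) \<in> Units (M2s R s)"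
  by (rule M.UnitsI[of _ "(\<one>, \<ominus> v, \<zero>, \<one>)"]) (auto simp: M2s_simps l_neg r_neg)

lemma M2s_LDU:
  assumes a: "a \<in> Units R" and bcd: "b \<in> carrier R" "c \<in> carrier R" "d \<in> carrier R"
  shows "(a, b, c, d) = (\<one>, \<zero>, c \<otimes> inv a, \<one>)
      \<otimes>\<^bsub>M2s R s\<^esub> (a, \<zero>, \<zero>, d \<ominus> s [^] (2::nat) \<otimes> c \<otimes> inv a \<otimes> b)
      \<otimes>\<^bsub>M2s R s\<^esub> (\<one>, inv a \<otimes> b, \<zero>, \<one>)"
proof -
  have ac: "a \<in> carrier R" "inv a \<in> carrier R" using a by auto
  have "s [^] (2::nat) \<otimes> c \<otimes> (inv a \<otimes> b) \<oplus> (d \<ominus> s [^] (2::nat) \<otimes> c \<otimes> inv a \<otimes> b) = d"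
    using ac bcd by (simp add: m_assoc a_minus_def) (metis a_comm add.inv_closed add.m_lcomm m_closed r_neg r_zero sq_closed)
  moreover have "a \<otimes> (inv a \<otimes> b) = b" using a ac bcd by (simp add: m_assoc[symmetric])
  moreover have "c \<otimes> inv a \<otimes> a = c" using a ac bcd by (simp add: m_assoc)
  ultimately show ?thesis using ac bcd by (simp add: M2s_simps)
qed

lemma M2s_Units_schur:
  assumes a: "a \<in> Units R" and bcd: "b \<in> carrier R" "c \<in> carrier R" "d \<in> carrier R"
    and "d \<ominus> s [^] (2::nat) \<otimes> c \<otimes> inv a \<otimes> b \<in> Units R"
  shows "(a, b, c, d) \<in> Units (M2s R s)"
  using a bcd assms(5)
  by (subst M2s_LDU[OF a bcd])
    (auto intro!: M.Units_m_closed M2s_lower_Units M2s_upper_Units M2s_diag_Units)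

lemma M2s_diag_jacobson:
  assumes j: "j1 \<in> jacobson R" "j2 \<in> jacobson R"
  shows "(j1, \<zero>, \<zero>, j2) \<in> jacobson (M2s R s)"
proof (rule M.jacobsonI)
  have jc: "j1 \<in> carrier R" "j2 \<in> carrier R" using j jacobson_subset by auto
  then show "(j1, \<zero>, \<zero>, j2) \<in> carrier (M2s R s)" by (simp add: M2s_simps)
  fix Y assume "Y \<in> carrier (M2s R s)"
  then obtain y1 y2 y3 y4 where Y: "Y = (y1, y2, y3, y4)"
    and yc: "y1 \<in> carrier R" "y2 \<in> carrier R" "y3 \<in> carrier R" "y4 \<in> carrier R"
    by (cases Y) (auto simp: M2s_simps)
  define a where "a = \<one> \<ominus> y1 \<otimes> j1"
  have a: "a \<in> Units R"
    unfolding a_def by (rule one_minus_jacobson_Units) (rule jacobson_l_mult_closed[OF yc(1) j(1)])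
  then have ac: "a \<in> carrier R" "inv a \<in> carrier R" by auto
  define w where "w = y4 \<oplus> s [^] (2::nat) \<otimes> y3 \<otimes> j1 \<otimes> inv a \<otimes> y2"
  have wc: "w \<in> carrier R" using yc jc ac by (simp add: w_def)
  have "\<one>\<^bsub>M2s R s\<^esub> \<ominus>\<^bsub>M2s R s\<^esub> Y \<otimes>\<^bsub>M2s R s\<^esub> (j1, \<zero>, \<zero>, j2)
      = (a, \<ominus> (y2 \<otimes> j2), \<ominus> (y3 \<otimes> j1), \<one> \<ominus> y4 \<otimes> j2)"
    using yc jc by (simp add: Y a_def M2s_simps M2s_minus) (simp add: a_minus_def)
  moreover have "(\<one> \<ominus> y4 \<otimes> j2) \<ominus> s [^] (2::nat) \<otimes> \<ominus> (y3 \<otimes> j1) \<otimes> inv a \<otimes> \<ominus> (y2 \<otimes> j2)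
      = \<one> \<ominus> w \<otimes> j2"
    using yc jc ac
    by (simp add: w_def a_minus_def r_minus l_minus l_distr minus_add m_assoc a_assoc)
  moreover have "\<one> \<ominus> w \<otimes> j2 \<in> Units R"
    by (rule one_minus_jacobson_Units) (rule jacobson_l_mult_closed[OF wc j(2)])
  ultimately have "\<one>\<^bsub>M2s R s\<^esub> \<ominus>\<^bsub>M2s R s\<^esub> Y \<otimes>\<^bsub>M2s R s\<^esub> (j1, \<zero>, \<zero>, j2) \<in> Units (M2s R s)"
    using M2s_Units_schur[OF a] yc jc by simp
  then show "\<exists>w\<in>carrier (M2s R s).
      w \<otimes>\<^bsub>M2s R s\<^esub> (\<one>\<^bsub>M2s R s\<^esub> \<ominus>\<^bsub>M2s R s\<^esub> Y \<otimes>\<^bsub>M2s R s\<^esub> (j1, \<zero>, \<zero>, j2)) = \<one>\<^bsub>M2s R s\<^esub>"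
    by (intro bexI[of _ "inv\<^bsub>M2s R s\<^esub> (\<one>\<^bsub>M2s R s\<^esub> \<ominus>\<^bsub>M2s R s\<^esub> Y \<otimes>\<^bsub>M2s R s\<^esub> (j1, \<zero>, \<zero>, j2))"]) auto
qed

lemma M2s_diag_trichotomy:
  assumes L: "local_ring R" and xy: "x \<in> carrier R" "y \<in> carrier R"
  shows "(x, \<zero>, \<zero>, y) \<in> Units (M2s R s)
    \<or> \<one>\<^bsub>M2s R s\<^esub> \<ominus>\<^bsub>M2s R s\<^esub> (x, \<zero>, \<zero>, y) \<in> Units (M2s R s)
    \<or> strongly_J_clean (M2s R s) (x, \<zero>, \<zero>, y)"
proof -
  have one_minus: "\<one>\<^bsub>M2s R s\<^esub> \<ominus>\<^bsub>M2s R s\<^esub> (x, \<zero>, \<zero>, y) = (\<one> \<ominus> x, \<zero>, \<zero>, \<one> \<ominus> y)"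
    using xy by (simp add: M2s_simps M2s_minus)
  have J_clean: "strongly_J_clean (M2s R s) (x, \<zero>, \<zero>, y)"
    if "G \<in> {(\<one>, \<zero>, \<zero>, \<zero>), (\<zero>, \<zero>, \<zero>, \<one>)}"
      "(x, \<zero>, \<zero>, y) \<ominus>\<^bsub>M2s R s\<^esub> G \<in> jacobson (M2s R s)" for G
    using that xy unfolding strongly_J_clean_def by (intro bexI[of _ G]) (auto simp: M2s_simps)
  consider "x \<in> Units R" "y \<in> Units R" | "\<one> \<ominus> x \<in> Units R" "\<one> \<ominus> y \<in> Units R"
    | "x \<in> jacobson R" "y \<ominus> \<one> \<in> jacobson R" | "x \<ominus> \<one> \<in> jacobson R" "y \<in> jacobson R"
    using local_ring_cases[OF L xy(1)] local_ring_cases[OF L xy(2)] by blast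
  then show ?thesis
  proof cases
    case 1
    then show ?thesis using M2s_diag_Units by blast
  next
    case 2
    then show ?thesis using M2s_diag_Units one_minus by simp
  next
    case 3
    then have "(x, \<zero>, \<zero>, y) \<ominus>\<^bsub>M2s R s\<^esub> (\<zero>, \<zero>, \<zero>, \<one>) \<in> jacobson (M2s R s)"
      using xy M2s_diag_jacobson by (simp add: M2s_minus) (simp add: a_minus_def)
    then show ?thesis using J_clean by blast
  next
    case 4
    then have "(x, \<zero>, \<zero>, y) \<ominus>\<^bsub>M2s R s\<^esub> (\<one>, \<zero>, \<zero>, \<zero>) \<in> jacobson (M2s R s)"
      using xy M2s_diag_jacobson by (simp add: M2s_minus) (simp add: a_minus_def)
    then show ?thesis using J_clean by blast
  qed
qed

lemma M2s_idempotent_schur_complement: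
  assumes L: "local_ring R" and a: "a \<in> Units R" and bcd: "b \<in> carrier R" "c \<in> carrier R" "d \<in> carrier R"
    and E: "(a, b, c, d) \<otimes>\<^bsub>M2s R s\<^esub> (a, b, c, d) = (a, b, c, d)"
    and ne: "(a, b, c, d) \<noteq> \<one>\<^bsub>M2s R s\<^esub>"
  shows "d = s [^] (2::nat) \<otimes> c \<otimes> inv a \<otimes> b"
proof -
  have ac: "a \<in> carrier R" "inv a \<in> carrier R" using a by auto
  define \<delta> where "\<delta> = d \<ominus> s [^] (2::nat) \<otimes> c \<otimes> inv a \<otimes> b"
  define Lo Di Up where "Lo = (\<one>, \<zero>, c \<otimes> inv a, \<one>)" and "Di = (a, \<zero>, \<zero>, \<delta>)"
    and "Up = (\<one>, inv a \<otimes> b, \<zero>, \<one>)"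
  have \<delta>c: "\<delta> \<in> carrier R" using ac bcd by (simp add: \<delta>_def)
  have LDU: "(a, b, c, d) = Lo \<otimes>\<^bsub>M2s R s\<^esub> Di \<otimes>\<^bsub>M2s R s\<^esub> Up"
    unfolding Lo_def Di_def Up_def \<delta>_def by (rule M2s_LDU[OF a bcd])
  have LU: "Lo \<in> Units (M2s R s)" "Up \<in> Units (M2s R s)"
    unfolding Lo_def Up_def using ac bcd by (auto intro: M2s_lower_Units M2s_upper_Units)
  have Dic: "Di \<in> carrier (M2s R s)" using ac \<delta>c by (simp add: Di_def M2s_simps)
  define W where "W = Up \<otimes>\<^bsub>M2s R s\<^esub> Lo"
  have Wc: "W \<in> carrier (M2s R s)" using LU by (auto simp: W_def)
  \<comment> \<open>Cancelling \<open>Lo\<close> and \<open>Up\<close> in \<open>E E = E\<close> shows that \<open>\<delta>\<close> is idempotent.\<close>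
  have "Lo \<otimes>\<^bsub>M2s R s\<^esub> (Di \<otimes>\<^bsub>M2s R s\<^esub> W \<otimes>\<^bsub>M2s R s\<^esub> Di) \<otimes>\<^bsub>M2s R s\<^esub> Up
      = (Lo \<otimes>\<^bsub>M2s R s\<^esub> Di \<otimes>\<^bsub>M2s R s\<^esub> Up) \<otimes>\<^bsub>M2s R s\<^esub> (Lo \<otimes>\<^bsub>M2s R s\<^esub> Di \<otimes>\<^bsub>M2s R s\<^esub> Up)"
    using LU Dic by (simp add: W_def M.m_assoc M.Units_closed)
  also have "\<dots> = Lo \<otimes>\<^bsub>M2s R s\<^esub> Di \<otimes>\<^bsub>M2s R s\<^esub> Up" using E by (simp add: LDU[symmetric])
  finally have "Di \<otimes>\<^bsub>M2s R s\<^esub> W \<otimes>\<^bsub>M2s R s\<^esub> Di = Di"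
    using M.Units_mult_cancel_both[OF LU] Dic Wc by simp
  moreover have "snd (snd (snd (Di \<otimes>\<^bsub>M2s R s\<^esub> W \<otimes>\<^bsub>M2s R s\<^esub> Di))) = \<delta> \<otimes> \<delta>"
    using ac bcd \<delta>c by (simp add: W_def Up_def Lo_def Di_def M2s_simps)
  ultimately have "\<delta> \<otimes> \<delta> = \<delta>" by (simp add: Di_def)
  moreover have "\<delta> \<noteq> \<one>"
  proof
    assume "\<delta> = \<one>"
    then have "(a, b, c, d) \<in> Units (M2s R s)"
      using LU M2s_diag_Units[OF a] LDU by (simp add: Di_def)
    then show False using M.Units_idempotent_eq_one E ne by blast
  qed
  ultimately have "\<delta> = \<zero>" using local_ring_idempotent[OF L \<delta>c] by blast
  then show ?thesis using ac bcd by (simp add: \<delta>_def)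
qed

lemma M2s_idempotent_conj:
  assumes L: "local_ring R" and a: "a \<in> Units R" and bcd: "b \<in> carrier R" "c \<in> carrier R" "d \<in> carrier R"
    and E: "(a, b, c, d) \<otimes>\<^bsub>M2s R s\<^esub> (a, b, c, d) = (a, b, c, d)"
    and ne: "(a, b, c, d) \<noteq> \<one>\<^bsub>M2s R s\<^esub>"
  shows "\<exists>P\<in>Units (M2s R s). P \<otimes>\<^bsub>M2s R s\<^esub> (a, b, c, d) = (\<one>, \<zero>, \<zero>, \<zero>) \<otimes>\<^bsub>M2s R s\<^esub> P"
proof -
  have ac: "a \<in> carrier R" "inv a \<in> carrier R" using a by auto
  note d = M2s_idempotent_schur_complement[OF assms]
  \<comment> \<open>\<open>P = [a b; -c 1-d]\<close> has Schur complement \<open>\<one>\<close>, and its rows are left eigenvectors of \<open>E\<close>.\<close>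
  define P where "P = (a, b, \<ominus> c, \<one> \<ominus> d)"
  have "(\<one> \<ominus> d) \<ominus> s [^] (2::nat) \<otimes> \<ominus> c \<otimes> inv a \<otimes> b = \<one>"
    using ac bcd unfolding d by (simp add: a_minus_def r_minus l_minus a_assoc r_neg l_neg)
  then have P: "P \<in> Units (M2s R s)"
    unfolding P_def using M2s_Units_schur[OF a, of b "\<ominus> c" "\<one> \<ominus> d"] bcd by simp
  have e: "a \<otimes> a \<oplus> s [^] (2::nat) \<otimes> b \<otimes> c = a" "a \<otimes> b \<oplus> b \<otimes> d = b"
      "c \<otimes> a \<oplus> d \<otimes> c = c" "s [^] (2::nat) \<otimes> c \<otimes> b \<oplus> d \<otimes> d = d"
    using E by (simp_all add: M2s_simps)
  have "\<ominus> c \<otimes> a \<oplus> (\<one> \<ominus> d) \<otimes> c = c \<ominus> (c \<otimes> a \<oplus> d \<otimes> c)"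
    using ac bcd by (simp add: a_minus_def l_distr l_minus minus_add a_ac)
  then have e3: "\<ominus> c \<otimes> a \<oplus> (\<one> \<ominus> d) \<otimes> c = \<zero>" using e(3) bcd by simp
  have "s [^] (2::nat) \<otimes> \<ominus> c \<otimes> b \<oplus> (\<one> \<ominus> d) \<otimes> d = d \<ominus> (s [^] (2::nat) \<otimes> c \<otimes> b \<oplus> d \<otimes> d)"
    using ac bcd by (simp add: a_minus_def l_distr l_minus r_minus minus_add a_ac)
  then have e4: "s [^] (2::nat) \<otimes> \<ominus> c \<otimes> b \<oplus> (\<one> \<ominus> d) \<otimes> d = \<zero>" using e(4) bcd by simp
  have "P \<otimes>\<^bsub>M2s R s\<^esub> (a, b, c, d) = (\<one>, \<zero>, \<zero>, \<zero>) \<otimes>\<^bsub>M2s R s\<^esub> P"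
    using e(1,2) e3 e4 ac bcd by (simp add: P_def M2s_simps)
  with P show ?thesis by blast
qed

lemma M2s_commute_idempotent_imp_diagonal:
  assumes "x \<in> carrier R" "q \<in> carrier R" "r \<in> carrier R" "y \<in> carrier R"
    and "(x, q, r, y) \<otimes>\<^bsub>M2s R s\<^esub> (\<one>, \<zero>, \<zero>, \<zero>) = (\<one>, \<zero>, \<zero>, \<zero>) \<otimes>\<^bsub>M2s R s\<^esub> (x, q, r, y)"
  shows "q = \<zero>" "r = \<zero>"
  using assms by (simp_all add: M2s_simps)

lemma M2s_commuting_idempotent_unit_corner:
  assumes L: "local_ring R"
    and E: "E \<in> carrier (M2s R s)" "E \<otimes>\<^bsub>M2s R s\<^esub> E = E" "E \<noteq> \<zero>\<^bsub>M2s R s\<^esub>" "E \<noteq> \<one>\<^bsub>M2s R s\<^esub>"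
    and A: "A \<in> carrier (M2s R s)" "A \<otimes>\<^bsub>M2s R s\<^esub> E = E \<otimes>\<^bsub>M2s R s\<^esub> A"
  obtains F where "F \<in> carrier (M2s R s)" "F \<otimes>\<^bsub>M2s R s\<^esub> F = F" "F \<noteq> \<one>\<^bsub>M2s R s\<^esub>"
    "fst F \<in> Units R" "A \<otimes>\<^bsub>M2s R s\<^esub> F = F \<otimes>\<^bsub>M2s R s\<^esub> A"
proof (cases "fst E \<in> Units R")
  case True
  then show ?thesis using that E A by blast
next
  case False
  let ?F = "\<one>\<^bsub>M2s R s\<^esub> \<ominus>\<^bsub>M2s R s\<^esub> E"
  have "fst ?F = \<one> \<ominus> fst E" using E(1) by (cases E) (simp add: M2s_simps M2s_minus)
  then have "fst ?F \<in> Units R"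
    using E(1) False local_ring_Units_or_jacobson[OF L] one_minus_jacobson_Units
    by (cases E) (auto simp: M2s_simps)
  moreover have "?F \<in> carrier (M2s R s)" "?F \<otimes>\<^bsub>M2s R s\<^esub> ?F = ?F"
    using E(1,2) M.idempotent_mult_one_minus(3) by auto
  moreover have "?F \<noteq> \<one>\<^bsub>M2s R s\<^esub>" using E(1,3) M.one_minus_eq_one_iff by blast
  moreover have "A \<otimes>\<^bsub>M2s R s\<^esub> ?F = ?F \<otimes>\<^bsub>M2s R s\<^esub> A" using E(1) A M.commute_one_minus by blast
  ultimately show ?thesis using that by blast
qed

lemma M2s_commuting_diagonalizable:
  assumes L: "local_ring R"
    and E: "E \<in> carrier (M2s R s)" "E \<otimes>\<^bsub>M2s R s\<^esub> E = E" "E \<noteq> \<zero>\<^bsub>M2s R s\<^esub>" "E \<noteq> \<one>\<^bsub>M2s R s\<^esub>"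
    and A: "A \<in> carrier (M2s R s)" "A \<otimes>\<^bsub>M2s R s\<^esub> E = E \<otimes>\<^bsub>M2s R s\<^esub> A"
  obtains P x y where "P \<in> Units (M2s R s)" "x \<in> carrier R" "y \<in> carrier R"
    "P \<otimes>\<^bsub>M2s R s\<^esub> A \<otimes>\<^bsub>M2s R s\<^esub> inv\<^bsub>M2s R s\<^esub> P = (x, \<zero>\<^bsub>R\<^esub>, \<zero>\<^bsub>R\<^esub>, y)"
proof -
  let ?G = "(\<one>, \<zero>, \<zero>, \<zero>)"
  obtain F where F: "F \<in> carrier (M2s R s)" "F \<otimes>\<^bsub>M2s R s\<^esub> F = F" "F \<noteq> \<one>\<^bsub>M2s R s\<^esub>"
    "fst F \<in> Units R" "A \<otimes>\<^bsub>M2s R s\<^esub> F = F \<otimes>\<^bsub>M2s R s\<^esub> A"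
    using M2s_commuting_idempotent_unit_corner[OF assms] .
  then have "\<exists>P\<in>Units (M2s R s). P \<otimes>\<^bsub>M2s R s\<^esub> F = ?G \<otimes>\<^bsub>M2s R s\<^esub> P"
    using M2s_idempotent_conj[OF L] by (cases F) (auto simp: M2s_simps)
  then obtain P where P: "P \<in> Units (M2s R s)" "P \<otimes>\<^bsub>M2s R s\<^esub> F = ?G \<otimes>\<^bsub>M2s R s\<^esub> P" by blast
  have "?G \<in> carrier (M2s R s)" by (simp add: M2s_simps)
  then have "P \<otimes>\<^bsub>M2s R s\<^esub> F \<otimes>\<^bsub>M2s R s\<^esub> inv\<^bsub>M2s R s\<^esub> P = ?G"
    using P by (simp add: M.m_assoc M.Units_closed)
  then have comm: "(P \<otimes>\<^bsub>M2s R s\<^esub> A \<otimes>\<^bsub>M2s R s\<^esub> inv\<^bsub>M2s R s\<^esub> P) \<otimes>\<^bsub>M2s R s\<^esub> ?G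
      = ?G \<otimes>\<^bsub>M2s R s\<^esub> (P \<otimes>\<^bsub>M2s R s\<^esub> A \<otimes>\<^bsub>M2s R s\<^esub> inv\<^bsub>M2s R s\<^esub> P)"
    using P A F(1,5) by (metis M.Units_conj_mult)
  obtain x q r y where A': "P \<otimes>\<^bsub>M2s R s\<^esub> A \<otimes>\<^bsub>M2s R s\<^esub> inv\<^bsub>M2s R s\<^esub> P = (x, q, r, y)"
    using prod_cases4 by blast
  have "P \<otimes>\<^bsub>M2s R s\<^esub> A \<otimes>\<^bsub>M2s R s\<^esub> inv\<^bsub>M2s R s\<^esub> P \<in> carrier (M2s R s)"
    using P A by (auto intro: M.Units_closed)
  then have xqry: "x \<in> carrier R" "q \<in> carrier R" "r \<in> carrier R" "y \<in> carrier R"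
    by (simp_all add: A' M2s_simps)
  have "q = \<zero>" "r = \<zero>"
    using M2s_commute_idempotent_imp_diagonal[OF xqry] comm by (simp_all only: A')
  then show ?thesis using that P A' xqry by blast
qed

end

theorem theorem2p13:
  fixes R :: "('a, 'b) ring_scheme" and s :: 'a and A :: "'a \<times> 'a \<times> 'a \<times> 'a"
  assumes "ring R" and "local_ring R" and "central R s"
    and "A \<in> carrier (M2s R s)"
  shows "strongly_clean (M2s R s) A \<longleftrightarrow>
           A \<in> Units (M2s R s)
         \<or> \<one>\<^bsub>M2s R s\<^esub> \<ominus>\<^bsub>M2s R s\<^esub> A \<in> Units (M2s R s)
         \<or> strongly_J_clean (M2s R s) A"
proof -
  interpret M2s_ring R s using assms(1,3) by (simp add: M2s_ring_def M2s_ring_axioms_def)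
  note L = assms(2) and A = assms(4)
  show ?thesis
  proof
    assume "strongly_clean (M2s R s) A"
    then obtain E where E: "E \<in> carrier (M2s R s)" "E \<otimes>\<^bsub>M2s R s\<^esub> E = E"
      "A \<otimes>\<^bsub>M2s R s\<^esub> E = E \<otimes>\<^bsub>M2s R s\<^esub> A" "A \<ominus>\<^bsub>M2s R s\<^esub> E \<in> Units (M2s R s)"
      unfolding strongly_clean_def by blast
    consider "E = \<zero>\<^bsub>M2s R s\<^esub>" | "E = \<one>\<^bsub>M2s R s\<^esub>" | "E \<noteq> \<zero>\<^bsub>M2s R s\<^esub>" "E \<noteq> \<one>\<^bsub>M2s R s\<^esub>"
      by blast
    then show "A \<in> Units (M2s R s) \<or> \<one>\<^bsub>M2s R s\<^esub> \<ominus>\<^bsub>M2s R s\<^esub> A \<in> Units (M2s R s)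
        \<or> strongly_J_clean (M2s R s) A"
    proof cases
      case 3
      obtain P x y where "P \<in> Units (M2s R s)" "x \<in> carrier R" "y \<in> carrier R"
        "P \<otimes>\<^bsub>M2s R s\<^esub> A \<otimes>\<^bsub>M2s R s\<^esub> inv\<^bsub>M2s R s\<^esub> P = (x, \<zero>\<^bsub>R\<^esub>, \<zero>\<^bsub>R\<^esub>, y)"
        using M2s_commuting_diagonalizable[OF L E(1,2) 3 A E(3)] .
      then show ?thesis using M.clean_trichotomy_conj A M2s_diag_trichotomy[OF L] by metis
    qed (use E(4) A M.one_minus_Units_iff in \<open>simp_all add: a_minus_def\<close>)
  qed (use A M.strongly_clean_if_Units M.strongly_clean_if_one_minus_Units
      M.strongly_clean_if_strongly_J_clean in blast)
qed

end
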